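(* Let $(\mathfrak M,\mathscr A)$ be a quasi-differentiable Banach manifold modelled on $X$ with $C^1$-kernel $\mathfrak M_0$, and let $\eta\in\mathfrak M_0$. Then: (1) the map $\varphi'(\eta):\mathcal T_\eta(\mathfrak M)\to X$ is well defined, i.e. for $\upsilon=f'(0)$ the value $(\varphi\circ\psi^{-1})'(\psi(\eta))(\psi\circ f)'(0)$ does not depend on the choice of the curve $f$ with $f'(0)=\upsilon$ nor on the $\mathfrak M_0$-regular chart $\psi$ at $\eta$ with $\psi\circ f$ continuously differentiable at $0$; (2) for any two $\mathfrak M_0$-regular charts $(\mathcal U,\varphi),(\mathcal V,\psi)$ at $\eta$ there are constants $C_1,C_2>0$ with $\|\upsilon\|_\psi\le C_1\|\upsilon\|_\varphi$ and $\|\upsilon\|_\varphi\le C_2\|\upsilon\|_\psi$ for all $\upsilon\in\mathcal T^{00}_\eta(\mathfrak M)$; (3) for every $\mathfrak M_0$-regular chart $(\mathcal U,\varphi)$ at $\eta$, $\varphi'(\eta):\mathcal T_\eta(\mathfrak M)\to X$ is a bijection.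
   Context: Densely embedded spaces and the class $\mathfrak C^k$. For Banach spaces $X$ and $X_0$, $X_0$ is a densely embedded Banach subspace of $X$ if $X_0$ is a dense linear subspace of $X$ and there is $C>0$ with $\|x\|_X\le C\|x\|_{X_0}$ for $x\in X_0$. For such $X_0\subseteq X$, a Banach space $Y$, an open set $U_0\subseteq X_0$ and an integer $k\ge1$, $\mathfrak C^k(U_0;X,Y)$ denotes the set of maps $F:U_0\to Y$ such that (i) for each $x_0\in U_0$ there are bounded symmetric $j$-linear maps $F^{(j)}(x_0):X^j\to Y$, $1\le j\le k$, with $\|F(x)-F(x_0)-\sum_{j=1}^k\frac1{j!}F^{(j)}(x_0)(x-x_0,\dots,x-x_0)\|_Y/\|x-x_0\|_{X_0}^k\to0$ as $\|x-x_0\|_{X_0}\to0$, and (ii) $x\mapsto F^{(j)}(x)$ is continuous from $U_0$ (with the $X_0$-topology) into the space $L^j(X,Y)$ of bounded $j$-linear maps. We write $F'=F^{(1)}$. Embedded submanifolds and quasi-differentiable manifolds. Let $\mathfrak M,\mathfrak M_0$ be topological Banach manifolds modelled on $X$, $X_0$, let $\mathscr A$ be a family of local charts of $\mathfrak M$, and $k\ge1$. $\mathfrak M_0$ is a $C^k$-embedded Banach submanifold of $\mathfrak M$ with respect to $\mathscr A$ if: (D1) $X_0$ is a densely embedded Banach subspace of $X$; (D2) $\mathfrak M_0\subseteq\mathfrak M$ and $\mathcal U\cap\mathfrak M_0$ is open in $\mathfrak M_0$ for every open $\mathcal U\subseteq\mathfrak M$; (D3) the domains of the charts of $\mathscr A$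 cover $\mathfrak M$; (D4) for $\eta\in\mathfrak M_0$ and $(\mathcal U,\varphi)\in\mathscr A$ with $\eta\in\mathcal U$, $(\mathcal U_0,\varphi|_{\mathcal U_0})$ with $\mathcal U_0:=\mathcal U\cap\mathfrak M_0$ is a local chart of $\mathfrak M_0$; (D5) for $\eta\in\mathfrak M_0$ and $(\mathcal U,\varphi),(\mathcal V,\psi)\in\mathscr A$ with $\eta\in\mathcal U\cap\mathcal V$, $\psi\circ\varphi^{-1}\in\mathfrak C^k(\varphi(\mathcal U_0\cap\mathcal V_0);X,X)$ and $\varphi\circ\psi^{-1}\in\mathfrak C^k(\psi(\mathcal U_0\cap\mathcal V_0);X,X)$. A chart of $\mathscr A$ whose domain contains $\eta$ is an $\mathfrak M_0$-regular local chart at $\eta$. $(\mathfrak M,\mathfrak M_0,\mathscr A)$ (with $\mathfrak M_0$ $C^1$-embedded) is inward spreadable if there is a Banach manifold $\mathfrak M_1\subseteq\mathfrak M_0$, modelled on a Banach space $X_1$, which is a $C^1$-embedded Banach submanifold of $\mathfrak M_0$ with respect to the restrictions to $\mathfrak M_0$ of the charts of $\mathscr A$ ($\mathfrak M_1$ is then an inner $C^1$-kernel and the charts of $\mathscr A$ are called $(\mathfrak M_0,\mathfrak M_1)$-regular). It is outward spreadable if there is a Banach manifold $\widetilde{\mathfrak M}\supseteq\mathfrak M$ with a chart family $\widetilde{\mathscr A}$ whose restrictions to $\mathfrak M$ form $\mathscr A$, such that $\mathfrak M$ is a $C^1$-embedded Banach submanifold of $\widetilde{\mathfrak M}$ with respect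 to $\widetilde{\mathscr A}$ ($\widetilde{\mathfrak M}$ is a shell). If both hold, $(\mathfrak M,\mathscr A)$ is a quasi-differentiable Banach manifold with $C^1$-kernel $\mathfrak M_0$. For charts at $\eta\in\mathfrak M_0$, $(\varphi\circ\psi^{-1})'(\psi(\eta))\in L(X)$ is the first derivative in the $\mathfrak C^1$ sense. Tangent vectors. Let $\eta\in\mathfrak M_0$. $\dot{\mathscr D}^{1s}_\eta$ is the set of real functions $F$ defined on a neighbourhood of $\eta$ in $\mathfrak M$ for which there is a neighbourhood $\mathcal O'$ of $\eta$ in $\mathfrak M$ such that for every $\mathfrak M_0$-regular chart $(\mathcal U,\varphi)$ at $\eta$, $F\circ\varphi^{-1}$ is Fréchet differentiable in the norm of $X$ on $\varphi(\mathcal O'\cap\mathcal U)$ with derivative continuous into $X^*$. A curve $f:(-\varepsilon,\varepsilon)\to\mathfrak M$ with $f(0)=\eta$ is continuously differentiable at $t=0$ if (after shrinking $\varepsilon$) there is an $\mathfrak M_0$-regular chart $(\mathcal U,\varphi)$ at $\eta$ with $t\mapsto\varphi(f(t))$ continuously differentiable on $(-\varepsilon,\varepsilon)$ in $X$, and $(\psi\circ f)'(0)=(\psi\circ\varphi^{-1})'(\varphi(\eta))(\varphi\circ f)'(0)$ for every $\mathfrak M_0$-regular chart $\psi$ at $\eta$ with $\psi\circ f$ continuously differentiable at $0$ in $X$. Its tangent vector is $f'(0):\dot{\mathscr D}^{1s}_\eta\to\mathbb R$, $f'(0)F=(F\circ f)'(0)$. $\mathcal T_\eta(\mathfrak M)$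 is the set of all such $f'(0)$. For an $\mathfrak M_0$-regular chart $\varphi$ at $\eta$, $\varphi'(\eta)\upsilon:=(\varphi\circ\psi^{-1})'(\psi(\eta))(\psi\circ f)'(0)$ for $\upsilon=f'(0)$, where $\psi$ is an $\mathfrak M_0$-regular chart at $\eta$ with $\psi\circ f$ continuously differentiable at $0$ in $X$; $\|\upsilon\|_\varphi:=\|\varphi'(\eta)\upsilon\|_X$. $\mathcal T^{00}_\eta(\mathfrak M)$ is the set of $f'(0)$ for curves $f:(-\varepsilon,\varepsilon)\to\mathfrak M_0$, $f(0)=\eta$, such that (after shrinking $\varepsilon$) for every $\mathfrak M_0$-regular chart $\varphi$ at $\eta$, $t\mapsto\varphi(f(t))$ is continuously differentiable on $(-\varepsilon,\varepsilon)$ in the norm of $X_0$. *)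

theory Defs
  imports "HOL-Analysis.Analysis"
begin

text \<open>A densely embedded Banach subspace X0 of X is represented by a Banach space
  type together with an injective bounded linear map j into X with dense range.\<close>

definition dense_embedding :: "('a::real_normed_vector \<Rightarrow> 'b::real_normed_vector) \<Rightarrow> bool" where
  "dense_embedding j \<longleftrightarrow> bounded_linear j \<and> inj j \<and> closure (range j) = UNIV"

definition frakC1 ::
  "('x0::real_normed_vector \<Rightarrow> 'x::real_normed_vector) \<Rightarrow> 'x0 set \<Rightarrow> ('x0 \<Rightarrow> 'y::real_normed_vector) \<Rightarrow> bool" where
  "frakC1 j U0 F \<longleftrightarrow>
     (\<exists>F' :: 'x0 \<Rightarrow> ('x \<Rightarrow>\<^sub>L 'y).
        (\<forall>x0\<in>U0. ((\<lambda>x. norm (F x - F x0 - blinfun_apply (F' x0) (j (x - x0))) / norm (x - x0))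
                     \<longlongrightarrow> 0) (at x0 within U0))
      \<and> continuous_on U0 F')"

text \<open>The first derivative in the C^1 sense (unique since j has dense range).\<close>
definition frakC1_deriv ::
  "('x0::real_normed_vector \<Rightarrow> 'x::real_normed_vector) \<Rightarrow> 'x0 set \<Rightarrow> ('x0 \<Rightarrow> 'y::real_normed_vector)
    \<Rightarrow> 'x0 \<Rightarrow> ('x \<Rightarrow>\<^sub>L 'y)" where
  "frakC1_deriv j U0 F x0 =
     (THE D. ((\<lambda>x. norm (F x - F x0 - blinfun_apply D (j (x - x0))) / norm (x - x0))
                     \<longlongrightarrow> 0) (at x0 within U0))"

definition local_chart :: "'p topology \<Rightarrow> 'p set \<Rightarrow> ('p \<Rightarrow> 'x::real_normed_vector) \<Rightarrow> bool" where
  "local_chart T U \<phi> \<longleftrightarrow> openin T U \<and> open (\<phi> ` U) \<and>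
     homeomorphic_map (subtopology T U) (top_of_set (\<phi> ` U)) \<phi>"

definition top_banach_manifold :: "'p topology \<Rightarrow> 'x::banach itself \<Rightarrow> bool" where
  "top_banach_manifold T (TYPE('x)) \<longleftrightarrow>
     (\<forall>p\<in>topspace T. \<exists>U (\<phi>::'p \<Rightarrow> 'x). p \<in> U \<and> local_chart T U \<phi>)"

text \<open>The restriction of an X-valued chart to M0, read as an X0-valued map.\<close>
definition chart0 :: "('x0 \<Rightarrow> 'x) \<Rightarrow> ('p \<Rightarrow> 'x) \<Rightarrow> 'p \<Rightarrow> 'x0" where
  "chart0 j \<phi> = (\<lambda>p. inv j (\<phi> p))"

definition trans_map :: "('x0 \<Rightarrow> 'x) \<Rightarrow> 'p set \<Rightarrow> ('p \<Rightarrow> 'x) \<Rightarrow> ('p \<Rightarrow> 'y) \<Rightarrow> 'x0 \<Rightarrow> 'y" where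
  "trans_map j U \<phi> \<psi> = (\<lambda>z. \<psi> (inv_into U \<phi> (j z)))"

definition trans_dom :: "'p topology \<Rightarrow> ('x0 \<Rightarrow> 'x) \<Rightarrow> 'p set \<Rightarrow> ('p \<Rightarrow> 'x) \<Rightarrow> 'p set \<Rightarrow> 'x0 set" where
  "trans_dom T0 j U \<phi> V = chart0 j \<phi> ` (U \<inter> V \<inter> topspace T0)"

text \<open>M0 (topology T0, modelled on 'x0 via j) is a C^1-embedded Banach submanifold of
  M (topology T, modelled on 'x) with respect to the chart family A: conditions (D1)-(D5).\<close>
definition c1_embedded ::
  "'p topology \<Rightarrow> ('p set \<times> ('p \<Rightarrow> 'x::banach)) set \<Rightarrow> 'p topology \<Rightarrow> ('x0::banach \<Rightarrow> 'x) \<Rightarrow> bool" where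
  "c1_embedded T A T0 j \<longleftrightarrow>
     top_banach_manifold T TYPE('x) \<and> top_banach_manifold T0 TYPE('x0) \<and>
     (\<forall>U \<phi>. (U, \<phi>) \<in> A \<longrightarrow> local_chart T U \<phi>) \<and>
     \<comment> \<open>(D1)\<close>
     dense_embedding j \<and>
     \<comment> \<open>(D2)\<close>
     topspace T0 \<subseteq> topspace T \<and> (\<forall>U. openin T U \<longrightarrow> openin T0 (U \<inter> topspace T0)) \<and>
     \<comment> \<open>(D3)\<close>
     topspace T \<subseteq> \<Union> (fst ` A) \<and>
     \<comment> \<open>(D4)\<close>
     (\<forall>\<eta>\<in>topspace T0. \<forall>U \<phi>. (U, \<phi>) \<in> A \<and> \<eta> \<in> U \<longrightarrow>
        (\<forall>p\<in>U \<inter> topspace T0. \<phi> p \<in> range j) \<and>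
        local_chart T0 (U \<inter> topspace T0) (chart0 j \<phi>)) \<and>
     \<comment> \<open>(D5) with k = 1\<close>
     (\<forall>\<eta>\<in>topspace T0. \<forall>U \<phi> V \<psi>. (U, \<phi>) \<in> A \<and> (V, \<psi>) \<in> A \<and> \<eta> \<in> U \<and> \<eta> \<in> V \<longrightarrow>
        frakC1 j (trans_dom T0 j U \<phi> V) (trans_map j U \<phi> \<psi>) \<and>
        frakC1 j (trans_dom T0 j V \<psi> U) (trans_map j V \<psi> \<phi>))"

definition restrict_charts0 ::
  "'p topology \<Rightarrow> ('x0 \<Rightarrow> 'x) \<Rightarrow> ('p set \<times> ('p \<Rightarrow> 'x)) set \<Rightarrow> ('p set \<times> ('p \<Rightarrow> 'x0)) set" where
  "restrict_charts0 T0 j A = (\<lambda>(U, \<phi>). (U \<inter> topspace T0, chart0 j \<phi>)) ` A"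

text \<open>Quasi-differentiable Banach manifold (M, A) with C^1-kernel M0, with explicit
  witnesses: an inner C^1-kernel M1 (topology T1, model 'x1 via j1) and a shell
  (topology Tt, charts At, model 'xt via e).\<close>
definition quasi_diff_manifold ::
  "'p topology \<Rightarrow> ('p set \<times> ('p \<Rightarrow> 'x::banach)) set \<Rightarrow> 'p topology \<Rightarrow> ('x0::banach \<Rightarrow> 'x) \<Rightarrow>
   'p topology \<Rightarrow> ('x1::banach \<Rightarrow> 'x0) \<Rightarrow>
   'p topology \<Rightarrow> ('p set \<times> ('p \<Rightarrow> 'xt::banach)) set \<Rightarrow> ('x \<Rightarrow> 'xt) \<Rightarrow> bool" where
  "quasi_diff_manifold T A T0 j T1 j1 Tt At e \<longleftrightarrow>
     c1_embedded T A T0 j \<and>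
     \<comment> \<open>inward spreadable\<close>
     c1_embedded T0 (restrict_charts0 T0 j A) T1 j1 \<and>
     \<comment> \<open>outward spreadable\<close>
     c1_embedded Tt At T e \<and>
     (\<forall>U \<phi>. (U, \<phi>) \<in> A \<longrightarrow>
        (\<exists>Ut \<phi>t. (Ut, \<phi>t) \<in> At \<and> U = Ut \<inter> topspace T \<and> (\<forall>p\<in>U. e (\<phi> p) = \<phi>t p))) \<and>
     (\<forall>Ut \<phi>t. (Ut, \<phi>t) \<in> At \<longrightarrow>
        (\<exists>U \<phi>. (U, \<phi>) \<in> A \<and> U = Ut \<inter> topspace T \<and> (\<forall>p\<in>U. e (\<phi> p) = \<phi>t p)))"

definition c1_near0 :: "'p set \<Rightarrow> ('p \<Rightarrow> 'y::real_normed_vector) \<Rightarrow> (real \<Rightarrow> 'p) \<Rightarrow> bool" where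
  "c1_near0 V \<psi> f \<longleftrightarrow> (\<exists>\<epsilon>>0. f ` {-\<epsilon><..<\<epsilon>} \<subseteq> V \<and>
      (\<exists>g'. (\<forall>t\<in>{-\<epsilon><..<\<epsilon>}. ((\<lambda>t. \<psi> (f t)) has_vector_derivative g' t) (at t)) \<and>
            continuous_on {-\<epsilon><..<\<epsilon>} g'))"

definition trans_deriv ::
  "'p topology \<Rightarrow> ('x0::real_normed_vector \<Rightarrow> 'x::real_normed_vector) \<Rightarrow> 'p set \<Rightarrow> ('p \<Rightarrow> 'x) \<Rightarrow>
   'p set \<Rightarrow> ('p \<Rightarrow> 'x) \<Rightarrow> 'p \<Rightarrow> ('x \<Rightarrow>\<^sub>L 'x)" where
  "trans_deriv T0 j U \<phi> V \<psi> \<eta> =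
     frakC1_deriv j (trans_dom T0 j U \<phi> V) (trans_map j U \<phi> \<psi>) (chart0 j \<phi> \<eta>)"

definition c1_curve ::
  "'p topology \<Rightarrow> ('x0::real_normed_vector \<Rightarrow> 'x::real_normed_vector) \<Rightarrow> ('p set \<times> ('p \<Rightarrow> 'x)) set \<Rightarrow>
   'p \<Rightarrow> (real \<Rightarrow> 'p) \<Rightarrow> bool" where
  "c1_curve T0 j A \<eta> f \<longleftrightarrow> f 0 = \<eta> \<and>
     (\<exists>U \<phi>. (U, \<phi>) \<in> A \<and> \<eta> \<in> U \<and> c1_near0 U \<phi> f \<and>
        (\<forall>V \<psi>. (V, \<psi>) \<in> A \<and> \<eta> \<in> V \<and> c1_near0 V \<psi> f \<longrightarrow>
           vector_derivative (\<lambda>t. \<psi> (f t)) (at 0) =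
           blinfun_apply (trans_deriv T0 j U \<phi> V \<psi> \<eta>) (vector_derivative (\<lambda>t. \<phi> (f t)) (at 0))))"

definition test_fns :: "'p topology \<Rightarrow> ('p set \<times> ('p \<Rightarrow> 'x::real_normed_vector)) set \<Rightarrow> 'p \<Rightarrow> ('p \<Rightarrow> real) set" where
  "test_fns T A \<eta> = {F. \<exists>W. openin T W \<and> \<eta> \<in> W \<and>
      (\<forall>U \<phi>. (U, \<phi>) \<in> A \<and> \<eta> \<in> U \<longrightarrow>
         (\<exists>D :: 'x \<Rightarrow> ('x \<Rightarrow>\<^sub>L real).
            (\<forall>x\<in>\<phi> ` (W \<inter> U). ((\<lambda>y. F (inv_into U \<phi> y)) has_derivative blinfun_apply (D x)) (at x)) \<and>
            continuous_on (\<phi> ` (W \<inter> U)) D))}"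

definition tangent_of :: "'p topology \<Rightarrow> ('p set \<times> ('p \<Rightarrow> 'x::real_normed_vector)) set \<Rightarrow> 'p \<Rightarrow>
    (real \<Rightarrow> 'p) \<Rightarrow> ('p \<Rightarrow> real) \<Rightarrow> real" where
  "tangent_of T A \<eta> f = (\<lambda>F\<in>test_fns T A \<eta>. deriv (\<lambda>t. F (f t)) 0)"

definition tangent_space ::
  "'p topology \<Rightarrow> 'p topology \<Rightarrow> ('x0::real_normed_vector \<Rightarrow> 'x::real_normed_vector) \<Rightarrow>
   ('p set \<times> ('p \<Rightarrow> 'x)) set \<Rightarrow> 'p \<Rightarrow> (('p \<Rightarrow> real) \<Rightarrow> real) set" where
  "tangent_space T T0 j A \<eta> = {tangent_of T A \<eta> f | f. c1_curve T0 j A \<eta> f}"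

definition tangent_space00 ::
  "'p topology \<Rightarrow> 'p topology \<Rightarrow> ('x0::real_normed_vector \<Rightarrow> 'x::real_normed_vector) \<Rightarrow>
   ('p set \<times> ('p \<Rightarrow> 'x)) set \<Rightarrow> 'p \<Rightarrow> (('p \<Rightarrow> real) \<Rightarrow> real) set" where
  "tangent_space00 T T0 j A \<eta> = {tangent_of T A \<eta> f | f. f 0 = \<eta> \<and>
      (\<forall>U \<phi>. (U, \<phi>) \<in> A \<and> \<eta> \<in> U \<longrightarrow> c1_near0 (U \<inter> topspace T0) (chart0 j \<phi>) f)}"

text \<open>phi'(eta) upsilon := (phi o psi^{-1})'(psi(eta)) (psi o f)'(0).\<close>
definition chart_deriv ::
  "'p topology \<Rightarrow> 'p topology \<Rightarrow> ('x0::real_normed_vector \<Rightarrow> 'x::real_normed_vector) \<Rightarrow>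
   ('p set \<times> ('p \<Rightarrow> 'x)) set \<Rightarrow> 'p \<Rightarrow> 'p set \<Rightarrow> ('p \<Rightarrow> 'x) \<Rightarrow> (('p \<Rightarrow> real) \<Rightarrow> real) \<Rightarrow> 'x" where
  "chart_deriv T T0 j A \<eta> U \<phi> \<upsilon> =
     (THE v. \<exists>f V \<psi>. c1_curve T0 j A \<eta> f \<and> tangent_of T A \<eta> f = \<upsilon> \<and>
        (V, \<psi>) \<in> A \<and> \<eta> \<in> V \<and> c1_near0 V \<psi> f \<and>
        v = blinfun_apply (trans_deriv T0 j V \<psi> U \<phi> \<eta>) (vector_derivative (\<lambda>t. \<psi> (f t)) (at 0)))"

end

theory Submission
  imports Defs
begin

text \<open>Tangent vectors act on test functions, so everything hinges on test functions
  detecting chart derivatives. By the chain rule a test function \<open>F\<close> sees a curve \<open>f\<close> through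
  \<open>(F \<circ> \<phi>\<inverse>)'(\<phi> \<eta>)\<close> applied to \<open>\<phi>'(\<eta>) f'(0)\<close>; the transition derivatives involved are
  only defined in the \<open>C\<^sup>1\<close> sense on the kernel, but density of the kernel determines them.
  The shell supplies enough test functions: for a continuous functional \<open>l\<close> on its model,
  obtained from Hahn--Banach, \<open>l \<circ> e \<circ> \<phi>\<close> is a test function, and these separate points.
  This gives (1) and injectivity in (3). Surjectivity comes from curves whose \<open>\<phi>\<close>-image is a
  straight line, and (2) from the boundedness of \<open>(\<psi> \<circ> \<phi>\<inverse>)'(\<phi> \<eta>)\<close>.\<close>

text \<open>Graphs of norm-dominated linear functionals on subspaces that take the value
  \<open>norm x0\<close> at \<open>x0\<close>; Zorn's lemma applied to them gives the Hahn--Banach theorem.\<close>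

definition norming_graph :: "'a::real_normed_vector \<Rightarrow> ('a \<times> real) set \<Rightarrow> bool" where
  "norming_graph x0 G \<longleftrightarrow>
     (\<forall>x r y s. (x, r) \<in> G \<longrightarrow> (y, s) \<in> G \<longrightarrow> (x + y, r + s) \<in> G) \<and>
     (\<forall>x r a. (x, r) \<in> G \<longrightarrow> (a *\<^sub>R x, a * r) \<in> G) \<and>
     (\<forall>x r s. (x, r) \<in> G \<longrightarrow> (x, s) \<in> G \<longrightarrow> r = s) \<and>
     (\<forall>x r. (x, r) \<in> G \<longrightarrow> r \<le> norm x) \<and>
     (x0, norm x0) \<in> G"

lemma norming_graph_line: "norming_graph x0 {(c *\<^sub>R x0, c * norm x0) | c. True}"
  unfolding norming_graph_def
proof (intro conjI allI impI)
  fix x r y s assume "(x, r) \<in> {(c *\<^sub>R x0, c * norm x0) | c. True}" "(y, s) \<in> {(c *\<^sub>R x0, c * norm x0) | c. True}"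
  then obtain a b where "x = a *\<^sub>R x0" "r = a * norm x0" "y = b *\<^sub>R x0" "s = b * norm x0" by blast
  then show "(x + y, r + s) \<in> {(c *\<^sub>R x0, c * norm x0) | c. True}"
    by (intro CollectI exI[of _ "a + b"]) (simp add: algebra_simps)
next
  fix x r a assume "(x, r) \<in> {(c *\<^sub>R x0, c * norm x0) | c. True}"
  then obtain b where "x = b *\<^sub>R x0" "r = b * norm x0" by blast
  then show "(a *\<^sub>R x, a * r) \<in> {(c *\<^sub>R x0, c * norm x0) | c. True}"
    by (intro CollectI exI[of _ "a * b"]) (simp add: algebra_simps)
next
  fix x r s assume "(x, r) \<in> {(c *\<^sub>R x0, c * norm x0) | c. True}" "(x, s) \<in> {(c *\<^sub>R x0, c * norm x0) | c. True}"
  then obtain a b where "x = a *\<^sub>R x0" "r = a * norm x0" "x = b *\<^sub>R x0" "s = b * norm x0" by blast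
  then show "r = s"
    by (cases "x0 = 0") (simp_all add: scaleR_cancel_right)
next
  fix x r assume "(x, r) \<in> {(c *\<^sub>R x0, c * norm x0) | c. True}"
  then obtain a where "x = a *\<^sub>R x0" "r = a * norm x0" by blast
  then show "r \<le> norm x" by (simp add: mult_right_mono)
qed (intro CollectI exI[of _ 1], simp)

lemma norming_graph_Union_chain:
  assumes "\<C> \<noteq> {}" "subset.chain {G. norming_graph x0 G} \<C>"
  shows "norming_graph x0 (\<Union>\<C>)"
proof -
  have graph: "norming_graph x0 G" if "G \<in> \<C>" for G
    using assms(2) that unfolding subset.chain_def by blast
  have common: "\<exists>G\<in>\<C>. p \<in> G \<and> q \<in> G" if "p \<in> \<Union>\<C>" "q \<in> \<Union>\<C>" for p q
    using that assms(2) unfolding subset.chain_def by blast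
  show ?thesis
    unfolding norming_graph_def
  proof (intro conjI allI impI)
    fix x r y s assume "(x, r) \<in> \<Union>\<C>" "(y, s) \<in> \<Union>\<C>"
    with common obtain G where "G \<in> \<C>" "(x, r) \<in> G" "(y, s) \<in> G" by blast
    with graph show "(x + y, r + s) \<in> \<Union>\<C>" unfolding norming_graph_def by blast
  next
    fix x r a assume "(x, r) \<in> \<Union>\<C>"
    with graph show "(a *\<^sub>R x, a * r) \<in> \<Union>\<C>" unfolding norming_graph_def by blast
  next
    fix x r s assume "(x, r) \<in> \<Union>\<C>" "(x, s) \<in> \<Union>\<C>"
    with common obtain G where "G \<in> \<C>" "(x, r) \<in> G" "(x, s) \<in> G" by blast
    with graph show "r = s" unfolding norming_graph_def by blast
  next
    fix x r assume "(x, r) \<in> \<Union>\<C>"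
    with graph show "r \<le> norm x" unfolding norming_graph_def by blast
  next
    from assms(1) graph show "(x0, norm x0) \<in> \<Union>\<C>" unfolding norming_graph_def by blast
  qed
qed

lemma norming_graph_extension_value:
  assumes G: "norming_graph x0 G"
  obtains c where "\<And>y r. (y, r) \<in> G \<Longrightarrow> r - norm (y - z) \<le> c"
    "\<And>y r. (y, r) \<in> G \<Longrightarrow> c \<le> norm (y + z) - r"
proof -
  have add: "\<And>x r y s. (x, r) \<in> G \<Longrightarrow> (y, s) \<in> G \<Longrightarrow> (x + y, r + s) \<in> G"
    and bound: "\<And>x r. (x, r) \<in> G \<Longrightarrow> r \<le> norm x" and "(0, 0) \<in> G"
    using G unfolding norming_graph_def by (blast, blast, metis mult_zero_left scaleR_zero_left)
  have squeeze: "r1 - norm (y1 - z) \<le> norm (y2 + z) - r2" if "(y1, r1) \<in> G" "(y2, r2) \<in> G" for y1 r1 y2 r2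
  proof -
    have "r1 + r2 \<le> norm ((y1 - z) + (y2 + z))" using bound[OF add[OF that]] by (simp add: algebra_simps)
    also have "\<dots> \<le> norm (y1 - z) + norm (y2 + z)" by (rule norm_triangle_ineq)
    finally show ?thesis by simp
  qed
  define S where "S = {r - norm (y - z) | y r. (y, r) \<in> G}"
  have "S \<noteq> {}" using \<open>(0, 0) \<in> G\<close> unfolding S_def by blast
  moreover have "bdd_above S" unfolding S_def bdd_above_def using squeeze[OF _ \<open>(0, 0) \<in> G\<close>] by fastforce
  ultimately show ?thesis
    using that[of "Sup S"] cSup_upper[of _ S] cSup_least[of S] squeeze unfolding S_def by blast
qed

lemma norming_graph_extension_dominated:
  assumes G: "norming_graph x0 G" and yr: "(y, r) \<in> G"
    and lower: "\<And>y r. (y, r) \<in> G \<Longrightarrow> r - norm (y - z) \<le> c"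
    and upper: "\<And>y r. (y, r) \<in> G \<Longrightarrow> c \<le> norm (y + z) - r"
  shows "r + t * c \<le> norm (y + t *\<^sub>R z)"
proof -
  have scale: "\<And>a. (a *\<^sub>R y, a * r) \<in> G" and bound: "r \<le> norm y"
    using G yr unfolding norming_graph_def by blast+
  consider "t = 0" | "t > 0" | "t < 0" by linarith
  then show ?thesis
  proof cases
    case 1
    then show ?thesis using bound by simp
  next
    case 2
    have "c \<le> norm ((1 / t) *\<^sub>R y + z) - (1 / t) * r" using upper[OF scale] .
    then have "t * c \<le> t * (norm ((1 / t) *\<^sub>R y + z) - (1 / t) * r)"
      using 2 by (simp add: mult_left_mono)
    also have "\<dots> = norm (t *\<^sub>R ((1 / t) *\<^sub>R y + z)) - r"
      using 2 by (simp add: right_diff_distrib)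
    also have "t *\<^sub>R ((1 / t) *\<^sub>R y + z) = y + t *\<^sub>R z" using 2 by (simp add: algebra_simps)
    finally show ?thesis by simp
  next
    case 3
    have "(-1 / t) * r - norm ((-1 / t) *\<^sub>R y - z) \<le> c" using lower[OF scale] .
    then have "(-t) * ((-1 / t) * r - norm ((-1 / t) *\<^sub>R y - z)) \<le> (-t) * c"
      using 3 by (simp add: mult_left_mono)
    moreover have "(-t) * ((-1 / t) * r - norm ((-1 / t) *\<^sub>R y - z)) = r - norm ((-t) *\<^sub>R ((-1 / t) *\<^sub>R y - z))"
      using 3 by (simp add: right_diff_distrib)
    ultimately have "r - norm ((-t) *\<^sub>R ((-1 / t) *\<^sub>R y - z)) \<le> (-t) * c" by simp
    also have "(-t) *\<^sub>R ((-1 / t) *\<^sub>R y - z) = y + t *\<^sub>R z" using 3 by (simp add: algebra_simps)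
    finally show ?thesis by simp
  qed
qed

lemma norming_graph_extension:
  assumes G: "norming_graph x0 G" and z: "\<forall>r. (z, r) \<notin> G"
    and lower: "\<And>y r. (y, r) \<in> G \<Longrightarrow> r - norm (y - z) \<le> c"
    and upper: "\<And>y r. (y, r) \<in> G \<Longrightarrow> c \<le> norm (y + z) - r"
  shows "norming_graph x0 {(y + t *\<^sub>R z, r + t * c) | y r t. (y, r) \<in> G}" (is "norming_graph x0 ?G'")
proof -
  have add: "\<And>x r y s. (x, r) \<in> G \<Longrightarrow> (y, s) \<in> G \<Longrightarrow> (x + y, r + s) \<in> G"
    and scale: "\<And>x r a. (x, r) \<in> G \<Longrightarrow> (a *\<^sub>R x, a * r) \<in> G"
    and unique: "\<And>x r s. (x, r) \<in> G \<Longrightarrow> (x, s) \<in> G \<Longrightarrow> r = s"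
    and x0: "(x0, norm x0) \<in> G"
    using G unfolding norming_graph_def by blast+
  have in_G': "(y + t *\<^sub>R z, r + t * c) \<in> ?G'" if "(y, r) \<in> G" for y r t
    using that by blast
  show ?thesis
    unfolding norming_graph_def
  proof (intro conjI allI impI)
    fix x r y s assume "(x, r) \<in> ?G'" "(y, s) \<in> ?G'"
    then obtain x1 r1 t1 y1 s1 t2 where "x = x1 + t1 *\<^sub>R z" "r = r1 + t1 * c" "(x1, r1) \<in> G"
      "y = y1 + t2 *\<^sub>R z" "s = s1 + t2 * c" "(y1, s1) \<in> G"
      by blast
    then show "(x + y, r + s) \<in> ?G'"
      using in_G'[OF add[of x1 r1 y1 s1], of "t1 + t2"] by (simp add: algebra_simps)
  next
    fix x r a assume "(x, r) \<in> ?G'"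
    then obtain x1 r1 t1 where "x = x1 + t1 *\<^sub>R z" "r = r1 + t1 * c" "(x1, r1) \<in> G" by blast
    then show "(a *\<^sub>R x, a * r) \<in> ?G'"
      using in_G'[OF scale[of x1 r1 a], of "a * t1"] by (simp add: algebra_simps)
  next
    fix x r s assume "(x, r) \<in> ?G'" "(x, s) \<in> ?G'"
    then obtain x1 r1 t1 y1 s1 t2 where eqs: "x = x1 + t1 *\<^sub>R z" "r = r1 + t1 * c" "(x1, r1) \<in> G"
      "x = y1 + t2 *\<^sub>R z" "s = s1 + t2 * c" "(y1, s1) \<in> G"
      by blast
    show "r = s"
    proof (cases "t1 = t2")
      case True
      then show ?thesis using eqs unique[of x1 r1 s1] by simp
    next
      case False
      have "y1 - x1 = (t1 - t2) *\<^sub>R z" using eqs(1,4) by (simp add: algebra_simps)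
      then have "z = (1 / (t1 - t2)) *\<^sub>R (y1 - x1)" using False by simp
      moreover have "(y1 - x1, s1 - r1) \<in> G" using add[OF eqs(6) scale[OF eqs(3), of "-1"]] by simp
      ultimately have "(z, (1 / (t1 - t2)) * (s1 - r1)) \<in> G" using scale by metis
      with z show ?thesis by blast
    qed
  next
    fix x r assume "(x, r) \<in> ?G'"
    then obtain y r1 t where "x = y + t *\<^sub>R z" "r = r1 + t * c" "(y, r1) \<in> G" by blast
    then show "r \<le> norm x" using norming_graph_extension_dominated[OF G _ lower upper] by simp
  next
    show "(x0, norm x0) \<in> ?G'" using in_G'[OF x0, of 0] by simp
  qed
qed

lemma norming_graph_extend:
  assumes G: "norming_graph x0 G" and z: "\<forall>r. (z, r) \<notin> G"
  shows "\<exists>G'. G \<subset> G' \<and> norming_graph x0 G'"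
proof -
  obtain c where lower: "\<And>y r. (y, r) \<in> G \<Longrightarrow> r - norm (y - z) \<le> c"
    and upper: "\<And>y r. (y, r) \<in> G \<Longrightarrow> c \<le> norm (y + z) - r"
    using norming_graph_extension_value[OF G] by metis
  define G' where "G' = {(y + t *\<^sub>R z, r + t * c) | y r t. (y, r) \<in> G}"
  have in_G': "(y + t *\<^sub>R z, r + t * c) \<in> G'" if "(y, r) \<in> G" for y r t
    unfolding G'_def using that by blast
  have "(0, 0) \<in> G" using G unfolding norming_graph_def by (metis mult_zero_left scaleR_zero_left)
  then have "(z, c) \<in> G'" using in_G'[of 0 0 1] by simp
  moreover have "G \<subseteq> G'" using in_G'[of _ _ 0] by auto
  ultimately have "G \<subset> G'" using z by blast
  moreover have "norming_graph x0 G'"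
    unfolding G'_def by (rule norming_graph_extension[OF G z lower upper])
  ultimately show ?thesis by blast
qed

theorem hahn_banach_norming_functional:
  fixes x0 :: "'a::real_normed_vector"
  obtains l :: "'a \<Rightarrow> real" where "bounded_linear l" "l x0 = norm x0"
proof -
  obtain M where M: "norming_graph x0 M" and maximal: "\<And>G. norming_graph x0 G \<Longrightarrow> M \<subseteq> G \<Longrightarrow> G = M"
    using subset_Zorn_nonempty[of "{G. norming_graph x0 G}"] norming_graph_line norming_graph_Union_chain
    by (metis (no_types, lifting) empty_iff mem_Collect_eq)
  have total: "\<exists>r. (z, r) \<in> M" for z
    using norming_graph_extend[OF M, of z] maximal by blast
  have unique: "\<And>x r s. (x, r) \<in> M \<Longrightarrow> (x, s) \<in> M \<Longrightarrow> r = s"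
    using M unfolding norming_graph_def by blast
  define l where "l z = (THE r. (z, r) \<in> M)" for z
  have l_eq: "l z = r \<longleftrightarrow> (z, r) \<in> M" for z r
  proof
    assume "l z = r"
    obtain s where "(z, s) \<in> M" using total by blast
    with unique show "(z, r) \<in> M" unfolding \<open>l z = r\<close>[symmetric] l_def
      by (metis the_equality)
  next
    assume "(z, r) \<in> M"
    with unique show "l z = r" unfolding l_def by blast
  qed
  have add: "l (x + y) = l x + l y" and scale: "l (a *\<^sub>R x) = a * l x" and bound: "l x \<le> norm x"
    for x y a using M unfolding norming_graph_def l_eq[symmetric] by blast+
  have "\<bar>l x\<bar> \<le> norm x" for x
    using bound[of x] bound[of "-x"] scale[of "-1" x] by simp
  then have "bounded_linear l"
    by (intro bounded_linear_intro[where K = 1]) (simp_all add: add scale)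
  moreover have "l x0 = norm x0" using M unfolding norming_graph_def l_eq by blast
  ultimately show ?thesis by (rule that)
qed

lemma local_chart_open_image:
  assumes "local_chart S U c" "openin S W" "W \<subseteq> U"
  shows "open (c ` W)"
proof -
  from assms(1) have "open (c ` U)" and hom: "homeomorphic_map (subtopology S U) (top_of_set (c ` U)) c"
    by (auto simp: local_chart_def)
  have "openin (subtopology S U) W" unfolding openin_subtopology using assms(2,3) by blast
  then have "openin (top_of_set (c ` U)) (c ` W)" using homeomorphic_map_openness_eq[OF hom] by blast
  then show ?thesis using openin_open_eq[OF \<open>open (c ` U)\<close>] by blast
qed

lemma local_chart_inj_on:
  assumes "local_chart S U c" shows "inj_on c U"
proof -
  from assms have "openin S U" and hom: "homeomorphic_map (subtopology S U) (top_of_set (c ` U)) c"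
    by (auto simp: local_chart_def)
  then show ?thesis using homeomorphic_imp_injective_map[OF hom] by (simp add: openin_subset Int_absorb1)
qed

lemma dense_embedding_linear_eq:
  assumes "dense_embedding j" "bounded_linear f" "bounded_linear g" "\<And>h. f (j h) = g (j h)"
  shows "f = g"
proof
  fix x
  have "closed {x. f x = g x}"
    using assms(2,3) by (intro closed_Collect_eq linear_continuous_on)
  moreover have "range j \<subseteq> {x. f x = g x}" using assms(4) by auto
  ultimately have "closure (range j) \<subseteq> {x. f x = g x}" by (rule closure_minimal[rotated])
  then show "f x = g x" using assms(1) unfolding dense_embedding_def by auto
qed

lemma has_derivative_dense_embedding_unique:
  assumes "dense_embedding j" "bounded_linear L1" "bounded_linear L2"
    and "(G has_derivative (\<lambda>h. L1 (j h))) (at x)" "(G has_derivative (\<lambda>h. L2 (j h))) (at x)"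
  shows "L1 = L2"
  using has_derivative_unique[OF assms(4,5)] by (intro dense_embedding_linear_eq[OF assms(1-3)]) meson

lemma frakC1_has_derivative:
  assumes "frakC1 j \<Omega> G" "open \<Omega>" "bounded_linear j"
  obtains G' where "\<And>x. x \<in> \<Omega> \<Longrightarrow> (G has_derivative (\<lambda>h. blinfun_apply (G' x) (j h))) (at x)"
    "continuous_on \<Omega> G'"
proof -
  from assms(1) obtain G' where lim: "\<forall>x0\<in>\<Omega>. ((\<lambda>x. norm (G x - G x0 - blinfun_apply (G' x0) (j (x - x0)))
      / norm (x - x0)) \<longlongrightarrow> 0) (at x0 within \<Omega>)" and "continuous_on \<Omega> G'"
    unfolding frakC1_def by blast
  have "(G has_derivative (\<lambda>h. blinfun_apply (G' x) (j h))) (at x)" if "x \<in> \<Omega>" for x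
  proof -
    have "bounded_linear (\<lambda>h. blinfun_apply (G' x) (j h))"
      using bounded_linear_compose[OF blinfun.bounded_linear_right assms(3)] .
    then have "(G has_derivative (\<lambda>h. blinfun_apply (G' x) (j h))) (at x within \<Omega>)"
      unfolding has_derivative_iff_norm using lim that by blast
    then show ?thesis using at_within_open[OF that assms(2)] by simp
  qed
  then show ?thesis using that \<open>continuous_on \<Omega> G'\<close> by blast
qed

lemma frakC1_deriv_has_derivative:
  assumes j: "dense_embedding j" and "frakC1 j \<Omega> G" "open \<Omega>" "x \<in> \<Omega>"
  shows "(G has_derivative (\<lambda>h. blinfun_apply (frakC1_deriv j \<Omega> G x) (j h))) (at x)"
proof -
  have "bounded_linear j" using j unfolding dense_embedding_def by blast
  then obtain G' where G': "(G has_derivative (\<lambda>h. blinfun_apply (G' x) (j h))) (at x)"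
    using frakC1_has_derivative[OF assms(2,3)] assms(4) by metis
  have "frakC1_deriv j \<Omega> G x = G' x"
    unfolding frakC1_deriv_def
  proof (rule the_equality)
    show "((\<lambda>y. norm (G y - G x - blinfun_apply (G' x) (j (y - x))) / norm (y - x)) \<longlongrightarrow> 0) (at x within \<Omega>)"
      using has_derivative_at_withinI[OF G'] unfolding has_derivative_iff_norm by (rule conjunct2)
  next
    fix D assume "((\<lambda>y. norm (G y - G x - blinfun_apply D (j (y - x))) / norm (y - x)) \<longlongrightarrow> 0) (at x within \<Omega>)"
    moreover have "bounded_linear (\<lambda>h. blinfun_apply D (j h))"
      using bounded_linear_compose[OF blinfun.bounded_linear_right \<open>bounded_linear j\<close>] .
    ultimately have "(G has_derivative (\<lambda>h. blinfun_apply D (j h))) (at x within \<Omega>)"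
      unfolding has_derivative_iff_norm by blast
    then have "(G has_derivative (\<lambda>h. blinfun_apply D (j h))) (at x)"
      using at_within_open[OF assms(4,3)] by simp
    then show "D = G' x"
      using has_derivative_dense_embedding_unique[OF j blinfun.bounded_linear_right blinfun.bounded_linear_right _ G']
      by (simp add: blinfun_eqI)
  qed
  then show ?thesis using G' by simp
qed

lemma c1_near0_has_real_derivative:
  assumes inj: "inj_on \<psi> V" and f: "c1_near0 V \<psi> f"
    and F: "((\<lambda>y. F (inv_into V \<psi> y)) has_derivative L) (at (\<psi> (f 0)))"
  shows "((\<lambda>t. F (f t)) has_real_derivative L (vector_derivative (\<lambda>t. \<psi> (f t)) (at 0))) (at 0)"
proof -
  obtain \<epsilon> g' where "\<epsilon> > 0" and fV: "f ` {-\<epsilon><..<\<epsilon>} \<subseteq> V"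
    and "\<forall>t\<in>{-\<epsilon><..<\<epsilon>}. ((\<lambda>t. \<psi> (f t)) has_vector_derivative g' t) (at t)"
    using f unfolding c1_near0_def by blast
  then have d: "((\<lambda>t. \<psi> (f t)) has_vector_derivative g' 0) (at 0)" by auto
  have "((\<lambda>t. F (inv_into V \<psi> (\<psi> (f t)))) has_derivative (\<lambda>s. L (s *\<^sub>R g' 0))) (at 0)"
    using has_derivative_compose[OF d[unfolded has_vector_derivative_def] F] .
  then have "((\<lambda>t. F (f t)) has_derivative (\<lambda>s. L (s *\<^sub>R g' 0))) (at 0)"
    by (rule has_derivative_transform_within_open[OF _ open_greaterThanLessThan[of "-\<epsilon>" \<epsilon>]])
      (use \<open>\<epsilon> > 0\<close> fV inv_into_f_f[OF inj] in \<open>auto simp: image_subset_iff\<close>)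
  moreover have "(\<lambda>s. L (s *\<^sub>R g' 0)) = (*) (L (g' 0))"
    using linear_scale[OF has_derivative_linear[OF F]] by (auto simp: fun_eq_iff)
  ultimately show ?thesis
    unfolding has_field_derivative_def vector_derivative_at[OF d] by simp
qed

lemma c1_embedded_local_chart: "c1_embedded T A T0 j \<Longrightarrow> (U, \<phi>) \<in> A \<Longrightarrow> local_chart T U \<phi>"
  unfolding c1_embedded_def by (elim conjE) (simp only:)

lemma c1_embedded_dense_embedding: "c1_embedded T A T0 j \<Longrightarrow> dense_embedding j"
  unfolding c1_embedded_def by (elim conjE) (simp only:)

lemma c1_embedded_topspace_subset: "c1_embedded T A T0 j \<Longrightarrow> topspace T0 \<subseteq> topspace T"
  unfolding c1_embedded_def by (elim conjE) (simp only:)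

lemma c1_embedded_openin_Int_topspace:
  "c1_embedded T A T0 j \<Longrightarrow> openin T W \<Longrightarrow> openin T0 (W \<inter> topspace T0)"
  unfolding c1_embedded_def by (elim conjE) (simp only:)

lemma c1_embedded_chart_in_range:
  "c1_embedded T A T0 j \<Longrightarrow> \<eta> \<in> topspace T0 \<Longrightarrow> (U, \<phi>) \<in> A \<Longrightarrow> \<eta> \<in> U \<Longrightarrow>
     p \<in> U \<inter> topspace T0 \<Longrightarrow> \<phi> p \<in> range j"
  unfolding c1_embedded_def by (elim conjE) (simp only:)

lemma c1_embedded_local_chart0:
  "c1_embedded T A T0 j \<Longrightarrow> \<eta> \<in> topspace T0 \<Longrightarrow> (U, \<phi>) \<in> A \<Longrightarrow> \<eta> \<in> U \<Longrightarrow>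
     local_chart T0 (U \<inter> topspace T0) (chart0 j \<phi>)"
  unfolding c1_embedded_def by (elim conjE) (simp only:)

lemma c1_embedded_frakC1_trans_map:
  "c1_embedded T A T0 j \<Longrightarrow> \<eta> \<in> topspace T0 \<Longrightarrow> (U, \<phi>) \<in> A \<Longrightarrow> (V, \<psi>) \<in> A \<Longrightarrow>
     \<eta> \<in> U \<Longrightarrow> \<eta> \<in> V \<Longrightarrow> frakC1 j (trans_dom T0 j U \<phi> V) (trans_map j U \<phi> \<psi>)"
  unfolding c1_embedded_def by (elim conjE) (simp only:)

lemma test_fn_has_derivative:
  assumes "F \<in> test_fns T A \<eta>" "(U, \<phi>) \<in> A" "\<eta> \<in> U"
  obtains L where "((\<lambda>y. F (inv_into U \<phi> y)) has_derivative L) (at (\<phi> \<eta>))"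
proof -
  obtain W where "\<eta> \<in> W" and "\<exists>D :: _ \<Rightarrow> (_ \<Rightarrow>\<^sub>L real).
      \<forall>x\<in>\<phi> ` (W \<inter> U). ((\<lambda>y. F (inv_into U \<phi> y)) has_derivative blinfun_apply (D x)) (at x)"
    using assms unfolding test_fns_def by blast
  then show ?thesis using that assms(3) by blast
qed

lemma c1_curve_start: "c1_curve T0 j A \<eta> f \<Longrightarrow> f 0 = \<eta>"
  unfolding c1_curve_def by blast

lemma c1_curve_obtain_chart:
  assumes "c1_curve T0 j A \<eta> f"
  obtains V \<psi> where "(V, \<psi>) \<in> A" "\<eta> \<in> V" "c1_near0 V \<psi> f"
  using assms unfolding c1_curve_def by blast

text \<open>Only the kernel and the shell of a quasi-differentiable manifold enter the argument;
  the inner \<open>C\<^sup>1\<close>-kernel does not.\<close>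

locale quasi_diff_point =
  fixes T T0 Tt :: "'p topology"
    and A :: "('p set \<times> ('p \<Rightarrow> 'x::banach)) set"
    and j :: "'x0::banach \<Rightarrow> 'x"
    and At :: "('p set \<times> ('p \<Rightarrow> 'xt::banach)) set"
    and e :: "'x \<Rightarrow> 'xt"
    and \<eta> :: 'p
  assumes kernel: "c1_embedded T A T0 j"
    and shell: "c1_embedded Tt At T e"
    and shell_chart: "(U, \<phi>) \<in> A \<Longrightarrow>
      \<exists>Ut \<phi>t. (Ut, \<phi>t) \<in> At \<and> U = Ut \<inter> topspace T \<and> (\<forall>p\<in>U. e (\<phi> p) = \<phi>t p)"
    and eta: "\<eta> \<in> topspace T0"
begin

lemma dense_embedding_j: "dense_embedding j"
  using c1_embedded_dense_embedding[OF kernel] .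

lemma bounded_linear_j: "bounded_linear j"
  using dense_embedding_j unfolding dense_embedding_def by blast

lemma bounded_linear_e: "bounded_linear e"
  using c1_embedded_dense_embedding[OF shell] unfolding dense_embedding_def by blast

lemma inj_e: "inj e"
  using c1_embedded_dense_embedding[OF shell] unfolding dense_embedding_def by blast

lemma eta_topspace: "\<eta> \<in> topspace T"
  using c1_embedded_topspace_subset[OF kernel] eta by blast

lemma inj_on_chart: "(U, \<phi>) \<in> A \<Longrightarrow> inj_on \<phi> U"
  using local_chart_inj_on[OF c1_embedded_local_chart[OF kernel]] .

lemma open_chart_image: "(U, \<phi>) \<in> A \<Longrightarrow> open (\<phi> ` U)"
  using c1_embedded_local_chart[OF kernel] unfolding local_chart_def by blast

lemma j_chart0: "(U, \<phi>) \<in> A \<Longrightarrow> \<eta> \<in> U \<Longrightarrow> p \<in> U \<inter> topspace T0 \<Longrightarrow> j (chart0 j \<phi> p) = \<phi> p"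
  unfolding chart0_def using c1_embedded_chart_in_range[OF kernel eta] by (simp add: f_inv_into_f)

lemma trans_map_chart0:
  "(U, \<phi>) \<in> A \<Longrightarrow> \<eta> \<in> U \<Longrightarrow> p \<in> U \<inter> topspace T0 \<Longrightarrow> trans_map j U \<phi> \<psi> (chart0 j \<phi> p) = \<psi> p"
  unfolding trans_map_def using j_chart0 inv_into_f_f[OF inj_on_chart] by simp

lemma openin_chart_domain: "(U, \<phi>) \<in> A \<Longrightarrow> openin T U"
  using c1_embedded_local_chart[OF kernel] unfolding local_chart_def by blast

lemma open_chart_image_Int: "(U, \<phi>) \<in> A \<Longrightarrow> (V, \<psi>) \<in> A \<Longrightarrow> open (\<phi> ` (U \<inter> V))"
  by (rule local_chart_open_image[OF c1_embedded_local_chart[OF kernel]])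
    (auto intro: openin_Int openin_chart_domain)

lemma open_trans_dom: "(U, \<phi>) \<in> A \<Longrightarrow> \<eta> \<in> U \<Longrightarrow> (V, \<psi>) \<in> A \<Longrightarrow> open (trans_dom T0 j U \<phi> V)"
  unfolding trans_dom_def
  by (rule local_chart_open_image[OF c1_embedded_local_chart0[OF kernel eta]])
    (auto intro: c1_embedded_openin_Int_topspace[OF kernel] openin_Int openin_chart_domain)

lemma chart0_in_trans_dom: "\<eta> \<in> U \<Longrightarrow> \<eta> \<in> V \<Longrightarrow> chart0 j \<phi> \<eta> \<in> trans_dom T0 j U \<phi> V"
  unfolding trans_dom_def using eta by blast

lemma trans_map_has_derivative:
  "(U, \<phi>) \<in> A \<Longrightarrow> \<eta> \<in> U \<Longrightarrow> (V, \<psi>) \<in> A \<Longrightarrow> \<eta> \<in> V \<Longrightarrow>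
    (trans_map j U \<phi> \<psi> has_derivative (\<lambda>h. blinfun_apply (trans_deriv T0 j U \<phi> V \<psi> \<eta>) (j h)))
      (at (chart0 j \<phi> \<eta>))"
  unfolding trans_deriv_def
  by (intro frakC1_deriv_has_derivative dense_embedding_j open_trans_dom chart0_in_trans_dom
      c1_embedded_frakC1_trans_map[OF kernel eta])

lemma trans_deriv_self:
  assumes U: "(U, \<phi>) \<in> A" "\<eta> \<in> U"
  shows "blinfun_apply (trans_deriv T0 j U \<phi> U \<phi> \<eta>) h = h"
proof -
  have "j z = trans_map j U \<phi> \<phi> z" if z: "z \<in> trans_dom T0 j U \<phi> U" for z
  proof -
    obtain p where "p \<in> U \<inter> topspace T0" "z = chart0 j \<phi> p" using z unfolding trans_dom_def by blast
    then show ?thesis using j_chart0[OF U, of p] trans_map_chart0[OF U, of p \<phi>] by simp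
  qed
  then have "(trans_map j U \<phi> \<phi> has_derivative (\<lambda>h. j h)) (at (chart0 j \<phi> \<eta>))"
    by (rule has_derivative_transform_within_open[OF bounded_linear_imp_has_derivative[OF bounded_linear_j]
        open_trans_dom[OF U U(1)] chart0_in_trans_dom[OF U(2) U(2)]])
  then have "blinfun_apply (trans_deriv T0 j U \<phi> U \<phi> \<eta>) = (\<lambda>h. h)"
    by (rule has_derivative_dense_embedding_unique[OF dense_embedding_j blinfun.bounded_linear_right
          bounded_linear_ident trans_map_has_derivative[OF U U]])
  then show ?thesis by simp
qed

text \<open>Transitions between charts of \<open>A\<close>, read through the shell, are differentiable at
  every point of \<open>\<phi> ` (U \<inter> V)\<close>, not only at points of the kernel.\<close>

lemma shell_transition:
  assumes U: "(U, \<phi>) \<in> A" "\<eta> \<in> U" and V: "(V, \<psi>) \<in> A" "\<eta> \<in> V"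
  obtains H H' where "\<And>p. p \<in> U \<inter> V \<Longrightarrow> H (\<phi> p) = e (\<psi> p)"
    "\<And>x. x \<in> \<phi> ` (U \<inter> V) \<Longrightarrow> (H has_derivative (\<lambda>h. blinfun_apply (H' x) (e h))) (at x)"
    "continuous_on (\<phi> ` (U \<inter> V)) H'"
proof -
  obtain Ut \<phi>t where Ut: "(Ut, \<phi>t) \<in> At" "U = Ut \<inter> topspace T" "\<forall>p\<in>U. e (\<phi> p) = \<phi>t p"
    using shell_chart[OF U(1)] by blast
  obtain Vt \<psi>t where Vt: "(Vt, \<psi>t) \<in> At" "V = Vt \<inter> topspace T" "\<forall>p\<in>V. e (\<psi> p) = \<psi>t p"
    using shell_chart[OF V(1)] by blast
  have "chart0 e \<phi>t p = \<phi> p" if "p \<in> U" for p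
    using that by (simp add: chart0_def inv_f_f[OF inj_e] Ut(3)[rule_format, symmetric])
  moreover have "Ut \<inter> Vt \<inter> topspace T = U \<inter> V" using Ut(2) Vt(2) by blast
  ultimately have dom: "trans_dom T e Ut \<phi>t Vt = \<phi> ` (U \<inter> V)"
    unfolding trans_dom_def by (metis (no_types, lifting) IntD1 image_cong)
  have "\<eta> \<in> Ut" "\<eta> \<in> Vt" using U(2) V(2) Ut(2) Vt(2) by blast+
  then have "frakC1 e (\<phi> ` (U \<inter> V)) (trans_map e Ut \<phi>t \<psi>t)"
    using c1_embedded_frakC1_trans_map[OF shell eta_topspace Ut(1) Vt(1)] dom by simp
  then obtain H' where
    "\<And>x. x \<in> \<phi> ` (U \<inter> V) \<Longrightarrow> (trans_map e Ut \<phi>t \<psi>t has_derivative (\<lambda>h. blinfun_apply (H' x) (e h))) (at x)"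
    "continuous_on (\<phi> ` (U \<inter> V)) H'"
    using frakC1_has_derivative[OF _ open_chart_image_Int[OF U(1) V(1)] bounded_linear_e] by blast
  moreover have "trans_map e Ut \<phi>t \<psi>t (\<phi> p) = e (\<psi> p)" if "p \<in> U \<inter> V" for p
  proof -
    have "inv_into Ut \<phi>t (\<phi>t p) = p"
      using inv_into_f_f[OF local_chart_inj_on[OF c1_embedded_local_chart[OF shell Ut(1)]]] that Ut(2) by blast
    then show ?thesis unfolding trans_map_def using that Ut(3) Vt(3) by simp
  qed
  ultimately show ?thesis using that by blast
qed

lemma trans_deriv_shell:
  assumes U: "(U, \<phi>) \<in> A" "\<eta> \<in> U" and V: "(V, \<psi>) \<in> A" "\<eta> \<in> V"
    and H: "\<And>p. p \<in> U \<inter> V \<Longrightarrow> H (\<phi> p) = e (\<psi> p)"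
    and H': "(H has_derivative (\<lambda>h. blinfun_apply H' (e h))) (at (\<phi> \<eta>))"
  shows "e (blinfun_apply (trans_deriv T0 j U \<phi> V \<psi> \<eta>) h) = blinfun_apply H' (e h)"
proof -
  let ?z0 = "chart0 j \<phi> \<eta>"
  have "j ?z0 = \<phi> \<eta>" using j_chart0[OF U] U eta by blast
  then have "((\<lambda>z. H (j z)) has_derivative (\<lambda>h. blinfun_apply H' (e (j h)))) (at ?z0)"
    using has_derivative_compose[OF bounded_linear_imp_has_derivative[OF bounded_linear_j] H'[folded \<open>j ?z0 = \<phi> \<eta>\<close>]] by simp
  moreover have "H (j z) = e (trans_map j U \<phi> \<psi> z)" if z: "z \<in> trans_dom T0 j U \<phi> V" for z
  proof -
    obtain p where "p \<in> U \<inter> V \<inter> topspace T0" "z = chart0 j \<phi> p" using z unfolding trans_dom_def by blast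
    then show ?thesis using H[of p] j_chart0[OF U, of p] trans_map_chart0[OF U, of p \<psi>] by simp
  qed
  ultimately have "((\<lambda>z. e (trans_map j U \<phi> \<psi> z)) has_derivative (\<lambda>h. blinfun_apply H' (e (j h)))) (at ?z0)"
    by (rule has_derivative_transform_within_open[OF _ open_trans_dom[OF U V(1)] chart0_in_trans_dom[OF U(2) V(2)]])
  moreover have "((\<lambda>z. e (trans_map j U \<phi> \<psi> z))
      has_derivative (\<lambda>h. e (blinfun_apply (trans_deriv T0 j U \<phi> V \<psi> \<eta>) (j h)))) (at ?z0)"
    using has_derivative_compose[OF trans_map_has_derivative[OF U V] bounded_linear_imp_has_derivative[OF bounded_linear_e]] .
  ultimately have "(\<lambda>x. e (blinfun_apply (trans_deriv T0 j U \<phi> V \<psi> \<eta>) x)) = (\<lambda>x. blinfun_apply H' (e x))"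
    by (intro has_derivative_dense_embedding_unique[OF dense_embedding_j]
        bounded_linear_compose[OF bounded_linear_e blinfun.bounded_linear_right]
        bounded_linear_compose[OF blinfun.bounded_linear_right bounded_linear_e])
  then show ?thesis by meson
qed

lemma test_fn_change_chart:
  assumes U: "(U, \<phi>) \<in> A" "\<eta> \<in> U" and V: "(V, \<psi>) \<in> A" "\<eta> \<in> V"
    and dU: "((\<lambda>y. F (inv_into U \<phi> y)) has_derivative LU) (at (\<phi> \<eta>))"
    and dV: "((\<lambda>y. F (inv_into V \<psi> y)) has_derivative LV) (at (\<psi> \<eta>))"
  shows "LV h = LU (blinfun_apply (trans_deriv T0 j V \<psi> U \<phi> \<eta>) h)"
proof -
  let ?z0 = "chart0 j \<psi> \<eta>" and ?TD = "blinfun_apply (trans_deriv T0 j V \<psi> U \<phi> \<eta>)"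
  have "j ?z0 = \<psi> \<eta>" and "trans_map j V \<psi> \<phi> ?z0 = \<phi> \<eta>"
    using j_chart0[OF V] trans_map_chart0[OF V] V eta by blast+
  then have d1: "((\<lambda>z. F (inv_into V \<psi> (j z))) has_derivative (\<lambda>h. LV (j h))) (at ?z0)"
    and d2: "((\<lambda>z. F (inv_into U \<phi> (trans_map j V \<psi> \<phi> z))) has_derivative (\<lambda>h. LU (?TD (j h)))) (at ?z0)"
    using has_derivative_compose[OF bounded_linear_imp_has_derivative[OF bounded_linear_j] dV[folded \<open>j ?z0 = _\<close>]]
      has_derivative_compose[OF trans_map_has_derivative[OF V U] dU[folded \<open>trans_map j V \<psi> \<phi> ?z0 = _\<close>]]
    by simp_all
  have "F (inv_into U \<phi> (trans_map j V \<psi> \<phi> z)) = F (inv_into V \<psi> (j z))"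
    if z: "z \<in> trans_dom T0 j V \<psi> U" for z
  proof -
    obtain p where "p \<in> V \<inter> U \<inter> topspace T0" "z = chart0 j \<psi> p" using z unfolding trans_dom_def by blast
    then show ?thesis
      using trans_map_chart0[OF V, of p \<phi>] j_chart0[OF V, of p]
        inv_into_f_f[OF inj_on_chart[OF U(1)]] inv_into_f_f[OF inj_on_chart[OF V(1)]] by simp
  qed
  then have "((\<lambda>z. F (inv_into V \<psi> (j z))) has_derivative (\<lambda>h. LU (?TD (j h)))) (at ?z0)"
    by (rule has_derivative_transform_within_open[OF d2 open_trans_dom[OF V U(1)] chart0_in_trans_dom[OF V(2) U(2)]])
  then have "LV = (\<lambda>x. LU (?TD x))"
    by (intro has_derivative_dense_embedding_unique[OF dense_embedding_j _ _ d1]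
        has_derivative_bounded_linear[OF dV]
        bounded_linear_compose[OF has_derivative_bounded_linear[OF dU] blinfun.bounded_linear_right])
  then show ?thesis by simp
qed

lemma tangent_of_eq_trans_deriv:
  assumes U: "(U, \<phi>) \<in> A" "\<eta> \<in> U" and V: "(V, \<psi>) \<in> A" "\<eta> \<in> V"
    and f: "f 0 = \<eta>" "c1_near0 V \<psi> f" and F: "F \<in> test_fns T A \<eta>"
    and dU: "((\<lambda>y. F (inv_into U \<phi> y)) has_derivative LU) (at (\<phi> \<eta>))"
  shows "tangent_of T A \<eta> f F =
    LU (blinfun_apply (trans_deriv T0 j V \<psi> U \<phi> \<eta>) (vector_derivative (\<lambda>t. \<psi> (f t)) (at 0)))"
proof -
  obtain LV where dV: "((\<lambda>y. F (inv_into V \<psi> y)) has_derivative LV) (at (\<psi> \<eta>))"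
    using test_fn_has_derivative[OF F V] .
  have "tangent_of T A \<eta> f F = deriv (\<lambda>t. F (f t)) 0" using F unfolding tangent_of_def by simp
  also have "\<dots> = LV (vector_derivative (\<lambda>t. \<psi> (f t)) (at 0))"
    using c1_near0_has_real_derivative[OF inj_on_chart[OF V(1)] f(2)] dV f(1) by (simp add: DERIV_imp_deriv)
  also have "\<dots> = LU (blinfun_apply (trans_deriv T0 j V \<psi> U \<phi> \<eta>) (vector_derivative (\<lambda>t. \<psi> (f t)) (at 0)))"
    by (rule test_fn_change_chart[OF U V dU dV])
  finally show ?thesis .
qed

lemma shell_functional_test_fn:
  assumes l: "bounded_linear l" and U: "(U, \<phi>) \<in> A" "\<eta> \<in> U"
  shows "(\<lambda>p. l (e (\<phi> p))) \<in> test_fns T A \<eta>"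
  unfolding test_fns_def mem_Collect_eq
proof (intro exI[of _ U] conjI allI impI)
  fix V \<psi> assume "(V, \<psi>) \<in> A \<and> \<eta> \<in> V"
  then have V: "(V, \<psi>) \<in> A" "\<eta> \<in> V" by auto
  obtain H H' where H: "\<And>p. p \<in> V \<inter> U \<Longrightarrow> H (\<psi> p) = e (\<phi> p)"
    and dH: "\<And>x. x \<in> \<psi> ` (V \<inter> U) \<Longrightarrow> (H has_derivative (\<lambda>h. blinfun_apply (H' x) (e h))) (at x)"
    and cH: "continuous_on (\<psi> ` (V \<inter> U)) H'"
    by (rule shell_transition[OF V U]) blast
  define D where "D x = (Blinfun l o\<^sub>L H' x) o\<^sub>L Blinfun e" for x
  have D: "blinfun_apply (D x) = (\<lambda>h. l (blinfun_apply (H' x) (e h)))" for x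
    unfolding D_def using bounded_linear_Blinfun_apply[OF l] bounded_linear_Blinfun_apply[OF bounded_linear_e]
    by (simp add: fun_eq_iff)
  show "\<exists>D :: _ \<Rightarrow> (_ \<Rightarrow>\<^sub>L real).
      (\<forall>x\<in>\<psi> ` (U \<inter> V). ((\<lambda>y. l (e (\<phi> (inv_into V \<psi> y)))) has_derivative blinfun_apply (D x)) (at x)) \<and>
      continuous_on (\<psi> ` (U \<inter> V)) D"
  proof (intro exI[of _ D] conjI ballI)
    fix x assume "x \<in> \<psi> ` (U \<inter> V)"
    then have x: "x \<in> \<psi> ` (V \<inter> U)" by (simp add: Int_commute)
    have "l (H y) = l (e (\<phi> (inv_into V \<psi> y)))" if "y \<in> \<psi> ` (V \<inter> U)" for y
    proof -
      from that obtain p where "p \<in> V \<inter> U" "y = \<psi> p" by blast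
      then show ?thesis using H[of p] inv_into_f_f[OF inj_on_chart[OF V(1)], of p] by simp
    qed
    then show "((\<lambda>y. l (e (\<phi> (inv_into V \<psi> y)))) has_derivative blinfun_apply (D x)) (at x)"
      unfolding D by (rule has_derivative_transform_within_open[OF
            has_derivative_compose[OF dH[OF x] bounded_linear_imp_has_derivative[OF l]]
            open_chart_image_Int[OF V(1) U(1)] x])
  next
    show "continuous_on (\<psi> ` (U \<inter> V)) D"
      unfolding D_def Int_commute[of U]
      by (intro bounded_bilinear.continuous_on[OF bounded_bilinear_blinfun_compose] continuous_on_const cH)
  qed
qed (use U openin_chart_domain in auto)

lemma trans_deriv_tangent_unique:
  assumes U: "(U, \<phi>) \<in> A" "\<eta> \<in> U" and V: "(V, \<psi>) \<in> A" "\<eta> \<in> V" and W: "(W, \<theta>) \<in> A" "\<eta> \<in> W"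
    and f: "f 0 = \<eta>" "c1_near0 V \<psi> f" and g: "g 0 = \<eta>" "c1_near0 W \<theta> g"
    and fg: "tangent_of T A \<eta> f = tangent_of T A \<eta> g"
  shows "blinfun_apply (trans_deriv T0 j V \<psi> U \<phi> \<eta>) (vector_derivative (\<lambda>t. \<psi> (f t)) (at 0)) =
         blinfun_apply (trans_deriv T0 j W \<theta> U \<phi> \<eta>) (vector_derivative (\<lambda>t. \<theta> (g t)) (at 0))"
    (is "?a = ?b")
proof -
  obtain l :: "'xt \<Rightarrow> real" where l: "bounded_linear l" "l (e (?a - ?b)) = norm (e (?a - ?b))"
    using hahn_banach_norming_functional by blast
  let ?F = "\<lambda>p. l (e (\<phi> p))"
  have "l (e y) = ?F (inv_into U \<phi> y)" if "y \<in> \<phi> ` U" for y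
    using that inv_into_f_f[OF inj_on_chart[OF U(1)]] by auto
  then have dU: "((\<lambda>y. ?F (inv_into U \<phi> y)) has_derivative (\<lambda>y. l (e y))) (at (\<phi> \<eta>))"
    by (rule has_derivative_transform_within_open[OF
          bounded_linear_imp_has_derivative[OF bounded_linear_compose[OF l(1) bounded_linear_e]]
          open_chart_image[OF U(1)] imageI[OF U(2)]])
  have F: "?F \<in> test_fns T A \<eta>" by (rule shell_functional_test_fn[OF l(1) U])
  have "l (e ?a) = l (e ?b)"
    using tangent_of_eq_trans_deriv[OF U V f F dU] tangent_of_eq_trans_deriv[OF U W g F dU] fg by simp
  then have "norm (e (?a - ?b)) = 0"
    using l linear_diff[OF bounded_linear.linear[OF l(1)]] linear_diff[OF bounded_linear.linear[OF bounded_linear_e]]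
    by simp
  then show ?thesis
    using inj_e linear_diff[OF bounded_linear.linear[OF bounded_linear_e]] unfolding inj_def by auto
qed

lemma chart_deriv_eq:
  assumes U: "(U, \<phi>) \<in> A" "\<eta> \<in> U" and f: "c1_curve T0 j A \<eta> f"
    and V: "(V, \<psi>) \<in> A" "\<eta> \<in> V" "c1_near0 V \<psi> f"
  shows "chart_deriv T T0 j A \<eta> U \<phi> (tangent_of T A \<eta> f) =
    blinfun_apply (trans_deriv T0 j V \<psi> U \<phi> \<eta>) (vector_derivative (\<lambda>t. \<psi> (f t)) (at 0))"
  unfolding chart_deriv_def
proof (rule the_equality)
  fix v assume "\<exists>g W \<theta>. c1_curve T0 j A \<eta> g \<and> tangent_of T A \<eta> g = tangent_of T A \<eta> f \<and>
      (W, \<theta>) \<in> A \<and> \<eta> \<in> W \<and> c1_near0 W \<theta> g \<and>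
      v = blinfun_apply (trans_deriv T0 j W \<theta> U \<phi> \<eta>) (vector_derivative (\<lambda>t. \<theta> (g t)) (at 0))"
  then obtain g W \<theta> where g: "c1_curve T0 j A \<eta> g" "tangent_of T A \<eta> g = tangent_of T A \<eta> f"
    and W: "(W, \<theta>) \<in> A" "\<eta> \<in> W" "c1_near0 W \<theta> g"
    and v: "v = blinfun_apply (trans_deriv T0 j W \<theta> U \<phi> \<eta>) (vector_derivative (\<lambda>t. \<theta> (g t)) (at 0))"
    by blast
  show "v = blinfun_apply (trans_deriv T0 j V \<psi> U \<phi> \<eta>) (vector_derivative (\<lambda>t. \<psi> (f t)) (at 0))"
    unfolding v by (rule trans_deriv_tangent_unique[OF U W(1,2) V(1,2) c1_curve_start[OF g(1)] W(3)
          c1_curve_start[OF f] V(3) g(2)])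
qed (use f V in blast)

lemma chart_deriv_self:
  "(U, \<phi>) \<in> A \<Longrightarrow> \<eta> \<in> U \<Longrightarrow> c1_curve T0 j A \<eta> f \<Longrightarrow> c1_near0 U \<phi> f \<Longrightarrow>
    chart_deriv T T0 j A \<eta> U \<phi> (tangent_of T A \<eta> f) = vector_derivative (\<lambda>t. \<phi> (f t)) (at 0)"
  using chart_deriv_eq[of U \<phi> f U \<phi>] trans_deriv_self by simp

lemma tangent_of_eq_chart_deriv:
  assumes U: "(U, \<phi>) \<in> A" "\<eta> \<in> U" and f: "c1_curve T0 j A \<eta> f" and F: "F \<in> test_fns T A \<eta>"
    and dU: "((\<lambda>y. F (inv_into U \<phi> y)) has_derivative LU) (at (\<phi> \<eta>))"
  shows "tangent_of T A \<eta> f F = LU (chart_deriv T T0 j A \<eta> U \<phi> (tangent_of T A \<eta> f))"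
proof -
  obtain V \<psi> where V: "(V, \<psi>) \<in> A" "\<eta> \<in> V" "c1_near0 V \<psi> f"
    using c1_curve_obtain_chart[OF f] .
  show ?thesis
    using tangent_of_eq_trans_deriv[OF U V(1,2) c1_curve_start[OF f] V(3) F dU] chart_deriv_eq[OF U f V]
    by simp
qed

lemma inj_on_chart_deriv:
  assumes U: "(U, \<phi>) \<in> A" "\<eta> \<in> U"
  shows "inj_on (chart_deriv T T0 j A \<eta> U \<phi>) (tangent_space T T0 j A \<eta>)"
proof (rule inj_onI)
  fix v w assume "v \<in> tangent_space T T0 j A \<eta>" "w \<in> tangent_space T T0 j A \<eta>"
    and eq: "chart_deriv T T0 j A \<eta> U \<phi> v = chart_deriv T T0 j A \<eta> U \<phi> w"
  then obtain f g where f: "c1_curve T0 j A \<eta> f" "v = tangent_of T A \<eta> f"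
    and g: "c1_curve T0 j A \<eta> g" "w = tangent_of T A \<eta> g"
    unfolding tangent_space_def by blast
  have "tangent_of T A \<eta> f F = tangent_of T A \<eta> g F" for F
  proof (cases "F \<in> test_fns T A \<eta>")
    case True
    then obtain LU where "((\<lambda>y. F (inv_into U \<phi> y)) has_derivative LU) (at (\<phi> \<eta>))"
      using test_fn_has_derivative[OF _ U] by blast
    then show ?thesis
      using tangent_of_eq_chart_deriv[OF U f(1) True] tangent_of_eq_chart_deriv[OF U g(1) True] eq f(2) g(2)
      by simp
  qed (simp add: tangent_of_def)
  then show "v = w" using f(2) g(2) by blast
qed

lemma kernel_curve_derivative:
  assumes U: "(U, \<phi>) \<in> A" "\<eta> \<in> U" and f: "c1_near0 (U \<inter> topspace T0) (chart0 j \<phi>) f"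
  obtains \<epsilon> g' where "\<epsilon> > 0" "f ` {-\<epsilon><..<\<epsilon>} \<subseteq> U \<inter> topspace T0" "continuous_on {-\<epsilon><..<\<epsilon>} g'"
    "\<And>t. t \<in> {-\<epsilon><..<\<epsilon>} \<Longrightarrow> ((\<lambda>t. chart0 j \<phi> (f t)) has_vector_derivative g' t) (at t)"
    "\<And>t. t \<in> {-\<epsilon><..<\<epsilon>} \<Longrightarrow> ((\<lambda>t. \<phi> (f t)) has_vector_derivative j (g' t)) (at t)"
proof -
  obtain \<epsilon> g' where \<epsilon>: "\<epsilon> > 0" "f ` {-\<epsilon><..<\<epsilon>} \<subseteq> U \<inter> topspace T0" "continuous_on {-\<epsilon><..<\<epsilon>} g'"
    and g': "\<And>t. t \<in> {-\<epsilon><..<\<epsilon>} \<Longrightarrow> ((\<lambda>t. chart0 j \<phi> (f t)) has_vector_derivative g' t) (at t)"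
    using f unfolding c1_near0_def by blast
  have "((\<lambda>t. \<phi> (f t)) has_vector_derivative j (g' t)) (at t)" if t: "t \<in> {-\<epsilon><..<\<epsilon>}" for t
  proof (rule has_vector_derivative_transform_within_open[OF
        bounded_linear.has_vector_derivative[OF bounded_linear_j g'[OF t]] open_greaterThanLessThan t])
    fix s assume "s \<in> {-\<epsilon><..<\<epsilon>}"
    then show "j (chart0 j \<phi> (f s)) = \<phi> (f s)" using \<epsilon>(2) j_chart0[OF U] by blast
  qed
  with \<epsilon> g' that show ?thesis by blast
qed

lemma c1_near0_of_kernel:
  assumes U: "(U, \<phi>) \<in> A" "\<eta> \<in> U" and f: "c1_near0 (U \<inter> topspace T0) (chart0 j \<phi>) f"
  shows "c1_near0 U \<phi> f"
proof -
  obtain \<epsilon> g' where "\<epsilon> > 0" "f ` {-\<epsilon><..<\<epsilon>} \<subseteq> U \<inter> topspace T0" "continuous_on {-\<epsilon><..<\<epsilon>} g'"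
    "\<And>t. t \<in> {-\<epsilon><..<\<epsilon>} \<Longrightarrow> ((\<lambda>t. \<phi> (f t)) has_vector_derivative j (g' t)) (at t)"
    using kernel_curve_derivative[OF U f] by metis
  then show ?thesis
    unfolding c1_near0_def
    by (intro exI[of _ \<epsilon>] conjI exI[of _ "\<lambda>t. j (g' t)"] ballI bounded_linear.continuous_on[OF bounded_linear_j]) auto
qed

lemma c1_curve_of_kernel:
  assumes U: "(U, \<phi>) \<in> A" "\<eta> \<in> U" and f0: "f 0 = \<eta>" and f: "c1_near0 (U \<inter> topspace T0) (chart0 j \<phi>) f"
  shows "c1_curve T0 j A \<eta> f"
proof -
  obtain \<epsilon> g' where \<epsilon>: "\<epsilon> > 0" "f ` {-\<epsilon><..<\<epsilon>} \<subseteq> U \<inter> topspace T0"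
    and d0: "\<And>t. t \<in> {-\<epsilon><..<\<epsilon>} \<Longrightarrow> ((\<lambda>t. chart0 j \<phi> (f t)) has_vector_derivative g' t) (at t)"
    and d: "\<And>t. t \<in> {-\<epsilon><..<\<epsilon>} \<Longrightarrow> ((\<lambda>t. \<phi> (f t)) has_vector_derivative j (g' t)) (at t)"
    using kernel_curve_derivative[OF U f] by metis
  have 0: "0 \<in> {-\<epsilon><..<\<epsilon>}" using \<epsilon>(1) by simp
  have "vector_derivative (\<lambda>t. \<psi> (f t)) (at 0) =
      blinfun_apply (trans_deriv T0 j U \<phi> V \<psi> \<eta>) (vector_derivative (\<lambda>t. \<phi> (f t)) (at 0))"
    if V: "(V, \<psi>) \<in> A" "\<eta> \<in> V" for V \<psi>
  proof -
    let ?TD = "blinfun_apply (trans_deriv T0 j U \<phi> V \<psi> \<eta>)"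
    have "((\<lambda>t. trans_map j U \<phi> \<psi> (chart0 j \<phi> (f t))) has_derivative (\<lambda>s. ?TD (j (s *\<^sub>R g' 0)))) (at 0)"
      using has_derivative_compose[OF d0[OF 0, unfolded has_vector_derivative_def]]
        trans_map_has_derivative[OF U V] f0 by simp
    moreover have "(\<lambda>s. ?TD (j (s *\<^sub>R g' 0))) = (\<lambda>s. s *\<^sub>R ?TD (j (g' 0)))"
      by (simp add: fun_eq_iff blinfun.scaleR_right linear_scale[OF bounded_linear.linear[OF bounded_linear_j]])
    ultimately have "((\<lambda>t. trans_map j U \<phi> \<psi> (chart0 j \<phi> (f t))) has_vector_derivative ?TD (j (g' 0))) (at 0)"
      unfolding has_vector_derivative_def by simp
    then have "((\<lambda>t. \<psi> (f t)) has_vector_derivative ?TD (j (g' 0))) (at 0)"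
      by (rule has_vector_derivative_transform_within_open[OF _ open_greaterThanLessThan 0])
        (use \<epsilon>(2) trans_map_chart0[OF U] in blast)
    then show ?thesis using vector_derivative_at d[OF 0] by metis
  qed
  then show ?thesis
    unfolding c1_curve_def using f0 U c1_near0_of_kernel[OF U f] by blast
qed

text \<open>A curve whose \<open>\<phi>\<close>-image is a straight line need not stay in the kernel, so
  its other chart images are controlled through the shell.\<close>

lemma vector_derivative_chart_line:
  assumes U: "(U, \<phi>) \<in> A" "\<eta> \<in> U" and V: "(V, \<psi>) \<in> A" "\<eta> \<in> V" and fV: "c1_near0 V \<psi> f"
    and "\<epsilon> > 0" and fU: "\<And>t. t \<in> {-\<epsilon><..<\<epsilon>} \<Longrightarrow> f t \<in> U"
    and line: "\<And>t. t \<in> {-\<epsilon><..<\<epsilon>} \<Longrightarrow> \<phi> (f t) = \<phi> \<eta> + t *\<^sub>R v"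
  shows "vector_derivative (\<lambda>t. \<psi> (f t)) (at 0) = blinfun_apply (trans_deriv T0 j U \<phi> V \<psi> \<eta>) v"
proof -
  obtain \<epsilon>' g where "\<epsilon>' > 0" and fV': "f ` {-\<epsilon>'<..<\<epsilon>'} \<subseteq> V"
    and g: "\<forall>t\<in>{-\<epsilon>'<..<\<epsilon>'}. ((\<lambda>t. \<psi> (f t)) has_vector_derivative g t) (at t)"
    using fV unfolding c1_near0_def by blast
  obtain H H' where H: "\<And>p. p \<in> U \<inter> V \<Longrightarrow> H (\<phi> p) = e (\<psi> p)"
    and dH: "\<And>x. x \<in> \<phi> ` (U \<inter> V) \<Longrightarrow> (H has_derivative (\<lambda>h. blinfun_apply (H' x) (e h))) (at x)"
    by (rule shell_transition[OF U V]) blast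
  have dH0: "(H has_derivative (\<lambda>h. blinfun_apply (H' (\<phi> \<eta>)) (e h))) (at (\<phi> \<eta>))"
    by (rule dH) (use U(2) V(2) in blast)
  then have "(H has_derivative (\<lambda>h. blinfun_apply (H' (\<phi> \<eta>)) (e h))) (at (\<phi> \<eta> + 0 *\<^sub>R v))"
    by simp
  then have "((\<lambda>t. H (\<phi> \<eta> + t *\<^sub>R v)) has_derivative (\<lambda>s. blinfun_apply (H' (\<phi> \<eta>)) (e (s *\<^sub>R v)))) (at 0)"
    by (rule has_derivative_compose[rotated]) (auto intro!: derivative_eq_intros)
  moreover have "(\<lambda>s. blinfun_apply (H' (\<phi> \<eta>)) (e (s *\<^sub>R v))) = (\<lambda>s. s *\<^sub>R blinfun_apply (H' (\<phi> \<eta>)) (e v))"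
    by (simp add: fun_eq_iff blinfun.scaleR_right linear_scale[OF bounded_linear.linear[OF bounded_linear_e]])
  ultimately have dH_line: "((\<lambda>t. H (\<phi> \<eta> + t *\<^sub>R v)) has_vector_derivative blinfun_apply (H' (\<phi> \<eta>)) (e v)) (at 0)"
    unfolding has_vector_derivative_def by simp
  have agree: "H (\<phi> \<eta> + t *\<^sub>R v) = e (\<psi> (f t))" if "t \<in> {-min \<epsilon> \<epsilon>'<..<min \<epsilon> \<epsilon>'}" for t
  proof -
    have t: "t \<in> {-\<epsilon><..<\<epsilon>}" "t \<in> {-\<epsilon>'<..<\<epsilon>'}" using that by auto
    then have "f t \<in> U \<inter> V" using fU fV' by blast
    then show ?thesis using line[OF t(1)] H[of "f t"] by simp
  qed
  have "0 \<in> {-min \<epsilon> \<epsilon>'<..<min \<epsilon> \<epsilon>'}" using \<open>\<epsilon> > 0\<close> \<open>\<epsilon>' > 0\<close> by simp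
  then have de: "((\<lambda>t. e (\<psi> (f t))) has_vector_derivative blinfun_apply (H' (\<phi> \<eta>)) (e v)) (at 0)"
    by (rule has_vector_derivative_transform_within_open[OF dH_line open_greaterThanLessThan _ agree])
  have g0: "((\<lambda>t. \<psi> (f t)) has_vector_derivative g 0) (at 0)"
    using g \<open>\<epsilon>' > 0\<close> by simp
  have "e (g 0) = blinfun_apply (H' (\<phi> \<eta>)) (e v)"
    by (rule vector_derivative_unique_at[OF bounded_linear.has_vector_derivative[OF bounded_linear_e g0] de])
  then have "g 0 = blinfun_apply (trans_deriv T0 j U \<phi> V \<psi> \<eta>) v"
    using trans_deriv_shell[OF U V H dH0, of v, symmetric] inj_e by (simp add: inj_eq)
  then show ?thesis using vector_derivative_at[OF g0] by simp
qed

lemma chart_line_curve: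
  assumes U: "(U, \<phi>) \<in> A" "\<eta> \<in> U"
  obtains f where "c1_curve T0 j A \<eta> f" "c1_near0 U \<phi> f" "vector_derivative (\<lambda>t. \<phi> (f t)) (at 0) = v"
proof -
  obtain r where "r > 0" and r: "ball (\<phi> \<eta>) r \<subseteq> \<phi> ` U"
    using open_chart_image[OF U(1)] U(2) open_contains_ball by blast
  define \<epsilon> where "\<epsilon> = r / (norm v + 1)"
  have "\<epsilon> > 0" unfolding \<epsilon>_def using \<open>r > 0\<close> by (simp add: add_nonneg_pos)
  define f where "f t = inv_into U \<phi> (\<phi> \<eta> + t *\<^sub>R v)" for t
  have line_in: "\<phi> \<eta> + t *\<^sub>R v \<in> \<phi> ` U" if "t \<in> {-\<epsilon><..<\<epsilon>}" for t
  proof -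
    have "\<bar>t\<bar> \<le> \<epsilon>" using that by auto
    then have "norm (t *\<^sub>R v) \<le> \<epsilon> * norm v" by (simp add: mult_right_mono)
    also have "\<dots> < \<epsilon> * (norm v + 1)" using \<open>\<epsilon> > 0\<close> by simp
    also have "\<dots> = r" unfolding \<epsilon>_def by (simp add: add_nonneg_eq_0_iff)
    finally show ?thesis using r by (simp add: subset_iff dist_norm)
  qed
  have fU: "f t \<in> U" and line: "\<phi> (f t) = \<phi> \<eta> + t *\<^sub>R v" if "t \<in> {-\<epsilon><..<\<epsilon>}" for t
    unfolding f_def using line_in[OF that] by (simp_all add: inv_into_into f_inv_into_f)
  have f0: "f 0 = \<eta>" unfolding f_def using inv_into_f_f[OF inj_on_chart[OF U(1)] U(2)] by simp
  have d: "((\<lambda>t. \<phi> (f t)) has_vector_derivative v) (at t)" if "t \<in> {-\<epsilon><..<\<epsilon>}" for t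
    by (rule has_vector_derivative_transform_within_open[of "\<lambda>t. \<phi> \<eta> + t *\<^sub>R v", OF _ open_greaterThanLessThan that])
      (auto intro!: derivative_eq_intros simp: line)
  have fv: "vector_derivative (\<lambda>t. \<phi> (f t)) (at 0) = v"
    using vector_derivative_at[OF d] \<open>\<epsilon> > 0\<close> by simp
  have c1U: "c1_near0 U \<phi> f"
    unfolding c1_near0_def
    by (intro exI[of _ \<epsilon>] conjI exI[of _ "\<lambda>t. v"] ballI \<open>\<epsilon> > 0\<close> continuous_on_const d) (use fU in auto)
  have "c1_curve T0 j A \<eta> f"
    unfolding c1_curve_def
    using f0 U c1U fv vector_derivative_chart_line[OF U _ _ _ \<open>\<epsilon> > 0\<close> fU line] by blast
  then show ?thesis using that c1U fv by blast
qed

lemma bij_betw_chart_deriv: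
  assumes U: "(U, \<phi>) \<in> A" "\<eta> \<in> U"
  shows "bij_betw (chart_deriv T T0 j A \<eta> U \<phi>) (tangent_space T T0 j A \<eta>) UNIV"
proof -
  have "v \<in> chart_deriv T T0 j A \<eta> U \<phi> ` tangent_space T T0 j A \<eta>" for v
  proof -
    obtain f where f: "c1_curve T0 j A \<eta> f" "c1_near0 U \<phi> f" "vector_derivative (\<lambda>t. \<phi> (f t)) (at 0) = v"
      using chart_line_curve[OF U] .
    then have "chart_deriv T T0 j A \<eta> U \<phi> (tangent_of T A \<eta> f) = v"
      using chart_deriv_self[OF U] by simp
    moreover have "tangent_of T A \<eta> f \<in> tangent_space T T0 j A \<eta>"
      unfolding tangent_space_def using f(1) by blast
    ultimately show ?thesis by blast
  qed
  then show ?thesis unfolding bij_betw_def using inj_on_chart_deriv[OF U] by blast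
qed

lemma norm_chart_deriv_le:
  assumes U: "(U, \<phi>) \<in> A" "\<eta> \<in> U" and V: "(V, \<psi>) \<in> A" "\<eta> \<in> V"
    and v: "v \<in> tangent_space00 T T0 j A \<eta>"
  shows "norm (chart_deriv T T0 j A \<eta> V \<psi> v) \<le>
    norm (trans_deriv T0 j U \<phi> V \<psi> \<eta>) * norm (chart_deriv T T0 j A \<eta> U \<phi> v)"
proof -
  obtain f where v_f: "v = tangent_of T A \<eta> f" and f0: "f 0 = \<eta>"
    and f: "c1_near0 (U \<inter> topspace T0) (chart0 j \<phi>) f"
    using v U unfolding tangent_space00_def by blast
  have "c1_curve T0 j A \<eta> f" "c1_near0 U \<phi> f"
    using c1_curve_of_kernel[OF U f0 f] c1_near0_of_kernel[OF U f] .
  then have "chart_deriv T T0 j A \<eta> V \<psi> v =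
      blinfun_apply (trans_deriv T0 j U \<phi> V \<psi> \<eta>) (chart_deriv T T0 j A \<eta> U \<phi> v)"
    using chart_deriv_eq[OF V _ U] chart_deriv_self[OF U] v_f by simp
  then show ?thesis by (simp add: norm_blinfun)
qed

lemma chart_deriv_norms_equivalent:
  assumes U: "(U, \<phi>) \<in> A" "\<eta> \<in> U" and V: "(V, \<psi>) \<in> A" "\<eta> \<in> V"
  shows "\<exists>C1>0. \<exists>C2>0. \<forall>\<upsilon>\<in>tangent_space00 T T0 j A \<eta>.
    norm (chart_deriv T T0 j A \<eta> V \<psi> \<upsilon>) \<le> C1 * norm (chart_deriv T T0 j A \<eta> U \<phi> \<upsilon>) \<and>
    norm (chart_deriv T T0 j A \<eta> U \<phi> \<upsilon>) \<le> C2 * norm (chart_deriv T T0 j A \<eta> V \<psi> \<upsilon>)"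
proof -
  have le_succ: "norm x \<le> N * norm y \<Longrightarrow> norm x \<le> (N + 1) * norm y" for x y :: 'x and N :: real
    by (simp add: distrib_right add_increasing2)
  have "norm (trans_deriv T0 j U \<phi> V \<psi> \<eta>) + 1 > 0" "norm (trans_deriv T0 j V \<psi> U \<phi> \<eta>) + 1 > 0"
    by (simp_all add: add_nonneg_pos)
  then show ?thesis
    using le_succ[OF norm_chart_deriv_le[OF U V]] le_succ[OF norm_chart_deriv_le[OF V U]] by blast
qed

end

theorem lemma2p10:
  fixes T T0 T1 Tt :: "'p topology"
    and A :: "('p set \<times> ('p \<Rightarrow> 'x::banach)) set"
    and j :: "'x0::banach \<Rightarrow> 'x"
    and j1 :: "'x1::banach \<Rightarrow> 'x0"
    and At :: "('p set \<times> ('p \<Rightarrow> 'xt::banach)) set"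
    and e :: "'x \<Rightarrow> 'xt"
    and \<eta> :: 'p
  assumes "quasi_diff_manifold T A T0 j T1 j1 Tt At e"
    and "\<eta> \<in> topspace T0"
  shows
    "(\<forall>U \<phi>. (U, \<phi>) \<in> A \<and> \<eta> \<in> U \<longrightarrow>
       (\<forall>f g V \<psi> W \<theta>.
          c1_curve T0 j A \<eta> f \<and> c1_curve T0 j A \<eta> g \<and> tangent_of T A \<eta> f = tangent_of T A \<eta> g \<and>
          (V, \<psi>) \<in> A \<and> \<eta> \<in> V \<and> c1_near0 V \<psi> f \<and>
          (W, \<theta>) \<in> A \<and> \<eta> \<in> W \<and> c1_near0 W \<theta> g \<longrightarrow>
          blinfun_apply (trans_deriv T0 j V \<psi> U \<phi> \<eta>) (vector_derivative (\<lambda>t. \<psi> (f t)) (at 0)) =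
          blinfun_apply (trans_deriv T0 j W \<theta> U \<phi> \<eta>) (vector_derivative (\<lambda>t. \<theta> (g t)) (at 0))))
   \<and> (\<forall>U \<phi> V \<psi>. (U, \<phi>) \<in> A \<and> \<eta> \<in> U \<and> (V, \<psi>) \<in> A \<and> \<eta> \<in> V \<longrightarrow>
       (\<exists>C1>0. \<exists>C2>0. \<forall>\<upsilon>\<in>tangent_space00 T T0 j A \<eta>.
          norm (chart_deriv T T0 j A \<eta> V \<psi> \<upsilon>) \<le> C1 * norm (chart_deriv T T0 j A \<eta> U \<phi> \<upsilon>) \<and>
          norm (chart_deriv T T0 j A \<eta> U \<phi> \<upsilon>) \<le> C2 * norm (chart_deriv T T0 j A \<eta> V \<psi> \<upsilon>)))
   \<and> (\<forall>U \<phi>. (U, \<phi>) \<in> A \<and> \<eta> \<in> U \<longrightarrow>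
       bij_betw (chart_deriv T T0 j A \<eta> U \<phi>) (tangent_space T T0 j A \<eta>) UNIV)"
proof -
  interpret quasi_diff_point T T0 Tt A j At e \<eta>
    using assms unfolding quasi_diff_manifold_def by unfold_locales blast+
  show ?thesis
    using trans_deriv_tangent_unique c1_curve_start chart_deriv_norms_equivalent bij_betw_chart_deriv
    by meson
qed

end
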